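(* Let $r,K,\mu$ satisfy Assumption 1. There exists $C>0$ such that for every $a>0$ and every $c\ge c_*$, any solution $(w,m)\in C^0([-a,a])^2$ of the localized problem (P$_a$) with speed $c$ satisfies $$\max(w(x),m(x))\le C\,e^{\frac{-c-\sqrt{c^2-c_*^2}}{2}(x+a)}\qquad\text{for all }x\in[-a,a].$$
   Context: Assumption 1: $r\in(1,\infty)$, $\mu\in\left(0,\min\left(\frac r2,1-\frac1r,1-K,K\right)\right)$, $K\in\left(0,\min\left(1,\frac{r}{r-1}\left(1-\frac{\mu}{1-\mu}\right)\right)\right)$. $c_*:=\sqrt{2\left(1+r-2\mu+\sqrt{(r-1)^2+4\mu^2}\right)}$. $f_w(w,m):=w(1-(w+m))+\mu(m-w)$, $f_m(w,m):=rm\left(1-\frac{w+m}{K}\right)+\mu(w-m)$; $(w^*,m^* )$ is the unique solution in $(0,1)\times(0,K)$ of $f_w=f_m=0$. The localized problem (P$_a$): $w,m\in C^0([-a,a])$ satisfy, in the weak sense on $(-a,a)$, $-cw'-w''=f_w(w,m)\chi_{w\ge0}\chi_{m\ge0}$, $-cm'-m''=f_m(w,m)\chi_{w\ge0}\chi_{m\ge0}$, with $w(-a)=w^*$, $m(-a)=m^*$, $w(a)=m(a)=0$. *)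

theory Defs
  imports "HOL-Analysis.Analysis"
begin

definition assumption1 :: "real \<Rightarrow> real \<Rightarrow> real \<Rightarrow> bool" where
  "assumption1 r K \<mu> \<longleftrightarrow>
     1 < r \<and>
     0 < \<mu> \<and> \<mu> < min (min (r/2) (1 - 1/r)) (min (1 - K) K) \<and>
     0 < K \<and> K < min 1 (r/(r-1) * (1 - \<mu>/(1-\<mu>)))"

definition c_star :: "real \<Rightarrow> real \<Rightarrow> real" where
  "c_star r \<mu> = sqrt (2 * (1 + r - 2*\<mu> + sqrt ((r-1)^2 + 4*\<mu>^2)))"

definition f_w :: "real \<Rightarrow> real \<Rightarrow> real \<Rightarrow> real" where
  "f_w \<mu> w m = w * (1 - (w + m)) + \<mu> * (m - w)"

definition f_m :: "real \<Rightarrow> real \<Rightarrow> real \<Rightarrow> real \<Rightarrow> real \<Rightarrow> real" where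
  "f_m r K \<mu> w m = r * m * (1 - (w + m)/K) + \<mu> * (w - m)"

definition eq_star :: "real \<Rightarrow> real \<Rightarrow> real \<Rightarrow> real \<times> real" where
  "eq_star r K \<mu> = (THE p. 0 < fst p \<and> fst p < 1 \<and> 0 < snd p \<and> snd p < K \<and>
       f_w \<mu> (fst p) (snd p) = 0 \<and> f_m r K \<mu> (fst p) (snd p) = 0)"

definition test_fun :: "real \<Rightarrow> (real \<Rightarrow> real) \<Rightarrow> bool" where
  "test_fun a \<phi> \<longleftrightarrow>
     (\<forall>n x. ((deriv ^^ n) \<phi>) differentiable (at x)) \<and>
     (\<exists>\<alpha> \<beta>. -a < \<alpha> \<and> \<beta> < a \<and> (\<forall>x. x \<notin> {\<alpha>..\<beta>} \<longrightarrow> \<phi> x = 0))"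

text \<open>Weak formulation of  -c u' - u'' = F  on (-a,a):
  integral of u (c phi' - phi'') equals integral of F phi, for all test functions phi.\<close>
definition weak_sol :: "real \<Rightarrow> real \<Rightarrow> (real \<Rightarrow> real) \<Rightarrow> (real \<Rightarrow> real) \<Rightarrow> bool" where
  "weak_sol a c u F \<longleftrightarrow>
     (\<forall>\<phi>. test_fun a \<phi> \<longrightarrow>
        integral {-a..a} (\<lambda>x. u x * (c * deriv \<phi> x - deriv (deriv \<phi>) x))
        = integral {-a..a} (\<lambda>x. F x * \<phi> x))"

definition ind :: "bool \<Rightarrow> real" where
  "ind b = (if b then 1 else 0)"

definition Pa :: "real \<Rightarrow> real \<Rightarrow> real \<Rightarrow> real \<Rightarrow> real \<Rightarrow>
                  (real \<Rightarrow> real) \<Rightarrow> (real \<Rightarrow> real) \<Rightarrow> bool" where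
  "Pa r K \<mu> a c w m \<longleftrightarrow>
     continuous_on {-a..a} w \<and> continuous_on {-a..a} m \<and>
     weak_sol a c w (\<lambda>x. f_w \<mu> (w x) (m x) * ind (w x \<ge> 0) * ind (m x \<ge> 0)) \<and>
     weak_sol a c m (\<lambda>x. f_m r K \<mu> (w x) (m x) * ind (w x \<ge> 0) * ind (m x \<ge> 0)) \<and>
     w (-a) = fst (eq_star r K \<mu>) \<and> m (-a) = snd (eq_star r K \<mu>) \<and>
     w a = 0 \<and> m a = 0"

end

theory Submission
  imports Defs "HOL-Computational_Algebra.Polynomial"
begin

text \<open>
  On the positive quadrant the reaction terms lie below the cooperative linear map
  \<open>A = [[1 - \<mu>, \<mu>], [\<mu>, r - \<mu>]]\<close>, whose Perron eigenvalue is \<open>\<lambda> = c_star\<^sup>2 / 4\<close> with a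
  positive eigenvector \<open>v\<close>. For \<open>c \<ge> c_star\<close> the rate \<open>s = (c + sqrt (c\<^sup>2 - c_star\<^sup>2)) / 2\<close>
  solves \<open>c s - s\<^sup>2 = \<lambda>\<close>, so \<open>\<kappa> v exp (-s (x + a))\<close> solves the linearised system.
  Take the least \<open>\<kappa>\<close> with \<open>(w, m) \<le> \<kappa> v exp (-s (x + a))\<close>. If it exceeded the constant
  dictated by the boundary values at \<open>-a\<close>, the differences would be weak supersolutions of
  \<open>-c z' - z'' \<ge> 0\<close>, positive at both ends and vanishing at a touching point, contradicting the
  strong minimum principle. That principle is proved by mollifying with a smooth bump, which turns
  the weak inequality into \<open>(exp (c t) z')' \<le> 0\<close>, so the mollified function has no interior
  minimum below its boundary values.
\<close>

section \<open>Smooth functions\<close>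

definition smooth :: "(real \<Rightarrow> real) \<Rightarrow> bool" where
  "smooth f \<longleftrightarrow> (\<forall>n x. ((deriv ^^ n) f) differentiable (at x))"

lemma funpow_deriv_Suc: "(deriv ^^ Suc n) f = (deriv ^^ n) (deriv f)"
  by (simp add: funpow_Suc_right del: funpow.simps)

lemma smooth_imp_differentiable: "smooth f \<Longrightarrow> f differentiable (at x)"
  unfolding smooth_def by (metis funpow_0)

lemma smooth_has_real_derivative: "smooth f \<Longrightarrow> (f has_real_derivative deriv f x) (at x)"
  using DERIV_deriv_iff_real_differentiable smooth_imp_differentiable by blast

lemma smooth_imp_continuous_on: "smooth f \<Longrightarrow> continuous_on S f"
  by (meson continuous_at_imp_continuous_on differentiable_imp_continuous_within
        smooth_imp_differentiable)

lemma smooth_deriv: "smooth f \<Longrightarrow> smooth (deriv f)"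
  unfolding smooth_def by (metis funpow_deriv_Suc)

lemma higher_deriv_add:
  fixes f g :: "real \<Rightarrow> real"
  assumes "\<forall>k<n. \<forall>x. ((deriv ^^ k) f) differentiable (at x)"
      and "\<forall>k<n. \<forall>x. ((deriv ^^ k) g) differentiable (at x)"
  shows "(deriv ^^ n) (\<lambda>x. f x + g x) = (\<lambda>x. (deriv ^^ n) f x + (deriv ^^ n) g x)"
  using assms
proof (induction n arbitrary: f g)
  case 0
  then show ?case by simp
next
  case (Suc n)
  have "\<And>x. f differentiable (at x)" "\<And>x. g differentiable (at x)"
    using Suc.prems by (metis funpow_0 zero_less_Suc)+
  then have "deriv (\<lambda>x. f x + g x) = (\<lambda>x. deriv f x + deriv g x)"
    by (auto intro!: ext deriv_add simp: real_differentiable_def field_differentiable_def)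
  moreover have "(deriv ^^ n) (\<lambda>x. deriv f x + deriv g x)
      = (\<lambda>x. (deriv ^^ n) (deriv f) x + (deriv ^^ n) (deriv g) x)"
    by (rule Suc.IH) (use Suc.prems in \<open>metis Suc_mono funpow_deriv_Suc\<close>)+
  ultimately show ?case
    by (simp add: funpow_deriv_Suc del: funpow.simps)
qed

lemma smooth_mult:
  assumes "smooth f" "smooth g"
  shows "smooth (\<lambda>x. f x * g x)"
proof -
  have "\<forall>f g. smooth f \<longrightarrow> smooth g \<longrightarrow> (\<forall>x. ((deriv ^^ n) (\<lambda>x. f x * g x)) differentiable (at x))"
    for n
  proof (induction n rule: less_induct)
    case (less n)
    show ?case
    proof (intro allI impI)
      fix f g x assume f: "smooth f" and g: "smooth g"
      note df = smooth_imp_differentiable[OF f] and dg = smooth_imp_differentiable[OF g]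
      show "((deriv ^^ n) (\<lambda>x. f x * g x)) differentiable (at x)"
      proof (cases n)
        case 0
        then show ?thesis using df dg by (simp add: differentiable_mult)
      next
        case (Suc k)
        have "deriv (\<lambda>x. f x * g x) = (\<lambda>x. deriv f x * g x + f x * deriv g x)"
          using df dg by (auto intro!: ext simp: real_differentiable_def field_differentiable_def)
        moreover have "(deriv ^^ k) (\<lambda>x. deriv f x * g x + f x * deriv g x)
           = (\<lambda>x. (deriv ^^ k) (\<lambda>x. deriv f x * g x) x + (deriv ^^ k) (\<lambda>x. f x * deriv g x) x)"
          by (rule higher_deriv_add) (use less.IH Suc f g smooth_deriv in auto)
        ultimately show ?thesis
          using less.IH Suc f g smooth_deriv
          by (auto simp: funpow_deriv_Suc simp del: funpow.simps intro!: derivative_intros)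
      qed
    qed
  qed
  then show ?thesis
    using assms unfolding smooth_def by blast
qed

lemma higher_deriv_affine:
  assumes "smooth f"
  shows "(deriv ^^ n) (\<lambda>x. \<gamma> * f (\<alpha> * x + \<beta>)) = (\<lambda>x. \<gamma> * \<alpha> ^ n * (deriv ^^ n) f (\<alpha> * x + \<beta>))"
  using assms
proof (induction n arbitrary: \<gamma> f)
  case 0
  then show ?case by simp
next
  case (Suc n)
  have "deriv (\<lambda>x. \<gamma> * f (\<alpha> * x + \<beta>)) = (\<lambda>x. (\<gamma> * \<alpha>) * deriv f (\<alpha> * x + \<beta>))"
  proof
    fix x
    have "(f has_real_derivative deriv f (\<alpha> * x + \<beta>)) (at (\<alpha> * x + \<beta>))"
      by (rule smooth_has_real_derivative[OF Suc.prems])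
    then have "((\<lambda>x. \<gamma> * f (\<alpha> * x + \<beta>)) has_real_derivative (\<gamma> * \<alpha>) * deriv f (\<alpha> * x + \<beta>)) (at x)"
      by (auto intro!: derivative_eq_intros DERIV_chain2[where f=f])
    then show "deriv (\<lambda>x. \<gamma> * f (\<alpha> * x + \<beta>)) x = (\<gamma> * \<alpha>) * deriv f (\<alpha> * x + \<beta>)"
      by (rule DERIV_imp_deriv)
  qed
  then show ?case
    using Suc.IH[of "deriv f" "\<gamma> * \<alpha>"] smooth_deriv[OF Suc.prems]
    by (simp add: funpow_deriv_Suc del: funpow.simps)
       (simp add: funpow_deriv_Suc[symmetric] mult_ac del: funpow.simps)
qed

lemma smooth_affine:
  assumes "smooth f"
  shows "smooth (\<lambda>x. \<gamma> * f (\<alpha> * x + \<beta>))"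
  unfolding smooth_def
proof (intro allI)
  fix n x
  have "(deriv ^^ n) f differentiable (at (\<alpha> * x + \<beta>))"
    using assms unfolding smooth_def by blast
  then have "((\<lambda>x. \<gamma> * \<alpha> ^ n * (deriv ^^ n) f (\<alpha> * x + \<beta>)) has_real_derivative
      \<gamma> * \<alpha> ^ n * (deriv ((deriv ^^ n) f) (\<alpha> * x + \<beta>) * \<alpha>)) (at x)"
    by (auto intro!: derivative_eq_intros DERIV_chain2[where f="(deriv ^^ n) f"]
             simp: DERIV_deriv_iff_real_differentiable)
  then show "((deriv ^^ n) (\<lambda>x. \<gamma> * f (\<alpha> * x + \<beta>))) differentiable (at x)"
    unfolding higher_deriv_affine[OF assms] real_differentiable_def by blast
qed

section \<open>A smooth bump function\<close>

definition exp_flat :: "real \<Rightarrow> real" where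
  "exp_flat t = (if t > 0 then exp (-1/t) else 0)"

text \<open>The \<open>n\<close>-th derivative of \<open>exp_flat\<close> is \<open>exp_flat_poly Q\<^sub>n\<close> with
  \<open>Q\<^sub>n\<^sub>+\<^sub>1 = X\<^sup>2 (Q\<^sub>n - Q\<^sub>n')\<close>; all of them are flat at \<open>0\<close> because \<open>exp x\<close> beats every polynomial.\<close>
definition exp_flat_poly :: "real poly \<Rightarrow> real \<Rightarrow> real" where
  "exp_flat_poly Q t = (if t > 0 then poly Q (1/t) * exp (-1/t) else 0)"

lemma poly_div_exp_tendsto_0: "((\<lambda>x. poly Q x / exp x) \<longlongrightarrow> (0::real)) at_top"
proof -
  have "((\<lambda>x. \<Sum>i\<le>degree Q. coeff Q i * (x ^ i / exp x)) \<longlongrightarrow> (0::real)) at_top"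
    by (intro tendsto_null_sum tendsto_mult_right_zero tendsto_power_div_exp_0)
  then show ?thesis
    by (simp add: poly_altdef sum_divide_distrib)
qed

lemma exp_flat_poly_has_real_derivative:
  "(exp_flat_poly Q has_real_derivative exp_flat_poly ([:0,0,1:] * (Q - pderiv Q)) t) (at t)"
proof (cases t "0::real" rule: linorder_cases)
  case greater
  have "((\<lambda>t. poly Q (1/t) * exp (-1/t)) has_real_derivative
          poly (pderiv Q) (1/t) * (-1/t^2) * exp (-1/t) + poly Q (1/t) * (exp (-1/t) * (1/t^2))) (at t)"
    using greater
    by (auto intro!: derivative_eq_intros DERIV_chain2[OF poly_DERIV] simp: power2_eq_square)
  also have "poly (pderiv Q) (1/t) * (-1/t^2) * exp (-1/t) + poly Q (1/t) * (exp (-1/t) * (1/t^2))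
     = exp_flat_poly ([:0,0,1:] * (Q - pderiv Q)) t"
    using greater by (simp add: exp_flat_poly_def algebra_simps power2_eq_square divide_simps)
  finally show ?thesis
    by (rule has_field_derivative_transform_within_open[where S="{0<..}"])
       (use greater in \<open>auto simp: exp_flat_poly_def\<close>)
next
  case less
  have "((\<lambda>t. 0) has_real_derivative exp_flat_poly ([:0,0,1:] * (Q - pderiv Q)) t) (at t)"
    using less by (simp add: exp_flat_poly_def)
  then show ?thesis
    by (rule has_field_derivative_transform_within_open[where S="{..<0}"])
       (use less in \<open>auto simp: exp_flat_poly_def\<close>)
next
  case equal
  have left: "((\<lambda>y. (exp_flat_poly Q y - exp_flat_poly Q 0) / (y - 0)) \<longlongrightarrow> 0) (at_left 0)"
  proof (rule tendsto_eventually)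
    show "eventually (\<lambda>y. (exp_flat_poly Q y - exp_flat_poly Q 0) / (y - 0) = 0) (at_left (0::real))"
      unfolding eventually_at_left_field by (auto simp: exp_flat_poly_def intro!: exI[of _ "-1"])
  qed
  have right: "((\<lambda>y. (exp_flat_poly Q y - exp_flat_poly Q 0) / (y - 0)) \<longlongrightarrow> 0) (at_right 0)"
    unfolding filterlim_at_right_to_top
  proof (rule Lim_transform_eventually)
    show "((\<lambda>x. poly ([:0,1:] * Q) x / exp x) \<longlongrightarrow> 0) at_top"
      by (rule poly_div_exp_tendsto_0)
    show "eventually (\<lambda>x. poly ([:0,1:] * Q) x / exp x
        = (exp_flat_poly Q (inverse x) - exp_flat_poly Q 0) / (inverse x - 0)) at_top"
      using eventually_gt_at_top[of 0]
      by eventually_elim (simp add: exp_flat_poly_def exp_minus field_simps)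
  qed
  show ?thesis
    unfolding equal has_field_derivative_iff
    using filterlim_split_at[OF left right] by (simp add: exp_flat_poly_def)
qed

lemma smooth_exp_flat: "smooth exp_flat"
proof -
  define step where "step Q = [:0,0,1:] * (Q - pderiv Q)" for Q :: "real poly"
  have "(deriv ^^ n) exp_flat = exp_flat_poly ((step ^^ n) 1)" for n
  proof (induction n)
    case 0
    then show ?case by (auto simp: exp_flat_def exp_flat_poly_def)
  next
    case (Suc n)
    then show ?case
      using DERIV_imp_deriv[OF exp_flat_poly_has_real_derivative] by (auto simp: step_def)
  qed
  then show ?thesis
    unfolding smooth_def using exp_flat_poly_has_real_derivative real_differentiable_def by metis
qed

definition bump :: "real \<Rightarrow> real" where
  "bump x = exp_flat (1 + x) * exp_flat (1 - x)"

lemma smooth_bump: "smooth bump"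
proof -
  have "bump = (\<lambda>x. (1 * exp_flat (1 * x + 1)) * (1 * exp_flat ((-1) * x + 1)))"
    by (auto simp: bump_def add.commute)
  then show ?thesis
    using smooth_mult smooth_affine[OF smooth_exp_flat] by metis
qed

lemma bump_nonneg: "bump x \<ge> 0"
  by (simp add: bump_def exp_flat_def)

lemma bump_eq_0: "\<bar>x\<bar> \<ge> 1 \<Longrightarrow> bump x = 0"
  by (auto simp: bump_def exp_flat_def)

lemma bump_ge: "\<bar>x\<bar> \<le> 1/2 \<Longrightarrow> bump x \<ge> exp (-4)"
proof -
  assume x: "\<bar>x\<bar> \<le> 1/2"
  then have pos: "1 + x \<ge> 1/2" "1 - x \<ge> 1/2" by (simp_all add: abs_le_iff)
  then have "exp (-2) \<le> exp (-1 / (1 + x))" "exp (-2) \<le> exp (-1 / (1 - x))"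
    by (simp_all add: divide_le_eq)
  then have "exp (-2) * exp (-2) \<le> exp (-1 / (1 + x)) * exp (-1 / (1 - x))"
    by (intro mult_mono) auto
  then show ?thesis
    using pos by (simp add: bump_def exp_flat_def mult_exp_exp)
qed

section \<open>Mollification\<close>

definition mollify :: "real \<Rightarrow> real \<Rightarrow> (real \<Rightarrow> real) \<Rightarrow> (real \<Rightarrow> real) \<Rightarrow> real \<Rightarrow> real" where
  "mollify a \<epsilon> G Z y = integral {-a..a} (\<lambda>x. Z x * G ((x - y) / \<epsilon>))"

lemma integrable_kernel_product:
  fixes Z G :: "real \<Rightarrow> real"
  assumes "continuous_on {l..u} Z" "continuous_on UNIV G"
  shows "(\<lambda>x. Z x * G ((x - y) / \<epsilon>)) integrable_on {l..u}"
proof -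
  have "continuous_on {l..u} (\<lambda>x. (x - y) * inverse \<epsilon>)"
    by (intro continuous_intros)
  then have "continuous_on {l..u} (\<lambda>x. G ((x - y) / \<epsilon>))"
    unfolding divide_inverse by (rule continuous_on_compose2[OF assms(2)]) auto
  then show ?thesis
    by (intro integrable_continuous_interval continuous_intros assms(1))
qed

lemma mollify_has_real_derivative:
  assumes Z: "continuous_on {-a..a} Z"
      and G: "\<And>t. (G has_real_derivative G' t) (at t)" and G': "continuous_on UNIV G'"
      and \<epsilon>: "\<epsilon> \<noteq> 0"
  shows "(mollify a \<epsilon> G Z has_real_derivative - mollify a \<epsilon> G' Z y / \<epsilon>) (at y)"
proof -
  have "continuous_on UNIV G"
    using G by (meson DERIV_continuous continuous_at_imp_continuous_on)
  have "((\<lambda>y. integral (cbox (-a) a) (\<lambda>x. Z x * G ((x - y) / \<epsilon>))) has_real_derivative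
          integral (cbox (-a) a) (\<lambda>x. Z x * (G' ((x - y) / \<epsilon>) * (- 1 / \<epsilon>)))) (at y within UNIV)"
  proof (rule leibniz_rule_field_derivative)
    fix y x :: real
    show "((\<lambda>y. Z x * G ((x - y) / \<epsilon>)) has_real_derivative Z x * (G' ((x - y) / \<epsilon>) * (- 1 / \<epsilon>)))
        (at y within UNIV)"
      using \<epsilon> by (auto intro!: derivative_eq_intros DERIV_chain2[OF G] simp: field_simps)
    show "(\<lambda>x. Z x * G ((x - y) / \<epsilon>)) integrable_on cbox (- a) a"
      using integrable_kernel_product[OF Z \<open>continuous_on UNIV G\<close>] by simp
  next
    have "continuous_on (UNIV \<times> {-a..a}) (\<lambda>p. Z (snd p) * (G' ((snd p - fst p) / \<epsilon>) * (- 1 / \<epsilon>)))"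
      by (intro continuous_intros continuous_on_compose2[OF Z] continuous_on_compose2[OF G'])
         (use \<epsilon> in auto)
    then show "continuous_on (UNIV \<times> cbox (- a) a) (\<lambda>(y, x). Z x * (G' ((x - y) / \<epsilon>) * (- 1 / \<epsilon>)))"
      by (simp add: case_prod_beta')
  qed auto
  then show ?thesis
    by (simp add: mollify_def[abs_def])
qed

lemma mollify_bump_has_real_derivative:
  assumes "continuous_on {-a..a} Z" "\<epsilon> \<noteq> 0"
  shows "(mollify a \<epsilon> bump Z has_real_derivative - mollify a \<epsilon> (deriv bump) Z y / \<epsilon>) (at y)"
    and "(mollify a \<epsilon> (deriv bump) Z has_real_derivative
          - mollify a \<epsilon> (deriv (deriv bump)) Z y / \<epsilon>) (at y)"
  by (rule mollify_has_real_derivative[OF assms(1) _ _ assms(2)];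
      auto intro: smooth_has_real_derivative smooth_imp_continuous_on smooth_bump smooth_deriv)+

lemma mollify_bump_bounds:
  assumes Z: "continuous_on {-a..a} Z" and \<epsilon>: "\<epsilon> > 0"
      and near: "\<And>x. x \<in> {-a..a} \<Longrightarrow> \<bar>x - t\<bar> < \<epsilon> \<Longrightarrow> \<bar>Z x - Z t\<bar> \<le> \<delta>"
  shows "mollify a \<epsilon> bump Z t \<le> (Z t + \<delta>) * mollify a \<epsilon> bump (\<lambda>_. 1) t"
    and "(Z t - \<delta>) * mollify a \<epsilon> bump (\<lambda>_. 1) t \<le> mollify a \<epsilon> bump Z t"
proof -
  have int: "(\<lambda>x. Y x * bump ((x - t) / \<epsilon>)) integrable_on {-a..a}" if "continuous_on {-a..a} Y" for Y
    by (rule integrable_kernel_product[OF that smooth_imp_continuous_on[OF smooth_bump]])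
  have window: "Z t - \<delta> \<le> Z x \<and> Z x \<le> Z t + \<delta>"
    if "x \<in> {-a..a}" "bump ((x - t) / \<epsilon>) \<noteq> 0" for x
  proof -
    have "\<bar>x - t\<bar> / \<epsilon> < 1"
      using that(2) bump_eq_0[of "(x - t) / \<epsilon>"] \<epsilon> by (force simp: abs_divide)
    then show ?thesis
      using near[OF that(1)] \<epsilon> by (simp add: divide_less_eq abs_le_iff)
  qed
  have "mollify a \<epsilon> bump Z t \<le> integral {-a..a} (\<lambda>x. (Z t + \<delta>) * bump ((x - t) / \<epsilon>))"
    unfolding mollify_def
    by (intro integral_le int Z continuous_on_const)
       (use window bump_nonneg in \<open>fastforce intro: mult_right_mono\<close>)
  then show "mollify a \<epsilon> bump Z t \<le> (Z t + \<delta>) * mollify a \<epsilon> bump (\<lambda>_. 1) t"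
    by (simp add: mollify_def)
  have "integral {-a..a} (\<lambda>x. (Z t - \<delta>) * bump ((x - t) / \<epsilon>)) \<le> mollify a \<epsilon> bump Z t"
    unfolding mollify_def
    by (intro integral_le int Z continuous_on_const)
       (use window bump_nonneg in \<open>fastforce intro: mult_right_mono\<close>)
  then show "(Z t - \<delta>) * mollify a \<epsilon> bump (\<lambda>_. 1) t \<le> mollify a \<epsilon> bump Z t"
    by (simp add: mollify_def)
qed

lemma mollify_bump_one_pos:
  assumes \<epsilon>: "\<epsilon> > 0" and t: "-a + \<epsilon> < t" "t < a - \<epsilon>"
  shows "mollify a \<epsilon> bump (\<lambda>_. 1) t > 0"
proof -
  have int: "(\<lambda>x. 1 * bump ((x - t) / \<epsilon>)) integrable_on {l..u}" for l u
    by (rule integrable_kernel_product[OF continuous_on_const smooth_imp_continuous_on[OF smooth_bump]])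
  have "\<epsilon> * exp (-4) = integral {t - \<epsilon>/2..t + \<epsilon>/2} (\<lambda>x. exp (-4))"
    using \<epsilon> by simp
  also have "\<dots> \<le> integral {t - \<epsilon>/2..t + \<epsilon>/2} (\<lambda>x. 1 * bump ((x - t) / \<epsilon>))"
  proof (rule integral_le[OF integrable_const_ivl int])
    fix x assume "x \<in> {t - \<epsilon>/2..t + \<epsilon>/2}"
    then have "\<bar>x - t\<bar> \<le> \<epsilon> / 2"
      by (simp only: abs_le_iff atLeastAtMost_iff) linarith
    then have "\<bar>(x - t) / \<epsilon>\<bar> \<le> 1/2"
      using \<epsilon> by (simp add: abs_divide divide_le_eq)
    then show "exp (-4) \<le> 1 * bump ((x - t) / \<epsilon>)"
      using bump_ge by simp
  qed
  also have "\<dots> \<le> mollify a \<epsilon> bump (\<lambda>_. 1) t"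
    unfolding mollify_def
    by (rule integral_subset_le) (use t \<epsilon> int bump_nonneg in auto)
  finally show ?thesis
    using \<epsilon> by (smt (verit) exp_gt_zero mult_pos_pos)
qed

lemma mollify_bump_one_const:
  assumes \<epsilon>: "\<epsilon> > 0" and s: "-a + \<epsilon> < s" "s < a - \<epsilon>" and t: "-a + \<epsilon> < t" "t < a - \<epsilon>"
  shows "mollify a \<epsilon> bump (\<lambda>_. 1) s = mollify a \<epsilon> bump (\<lambda>_. 1) t"
proof -
  have "mollify a \<epsilon> (deriv bump) (\<lambda>_. 1) y = 0" if y: "-a + \<epsilon> < y" "y < a - \<epsilon>" for y
  proof -
    have "((\<lambda>x. deriv bump ((x - y) / \<epsilon>) * (1 / \<epsilon>)) has_integral
        bump ((a - y) / \<epsilon>) - bump ((-a - y) / \<epsilon>)) {-a..a}"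
    proof (rule fundamental_theorem_of_calculus)
      show "-a \<le> a" using y \<epsilon> by simp
      fix x
      have "((\<lambda>x. bump ((x - y) / \<epsilon>)) has_real_derivative deriv bump ((x - y) / \<epsilon>) * (1 / \<epsilon>)) (at x)"
        by (rule DERIV_chain2[OF smooth_has_real_derivative[OF smooth_bump]])
           (use \<epsilon> in \<open>auto intro!: derivative_eq_intros\<close>)
      then show "((\<lambda>x. bump ((x - y) / \<epsilon>)) has_vector_derivative
          deriv bump ((x - y) / \<epsilon>) * (1 / \<epsilon>)) (at x within {-a..a})"
        by (simp add: has_real_derivative_iff_has_vector_derivative has_vector_derivative_at_within)
    qed
    moreover have "bump ((a - y) / \<epsilon>) = 0" "bump ((-a - y) / \<epsilon>) = 0"
      using y \<epsilon> by (auto intro!: bump_eq_0 simp: le_divide_eq divide_le_eq)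
    ultimately have "integral {-a..a} (\<lambda>x. deriv bump ((x - y) / \<epsilon>) * (1 / \<epsilon>)) = 0"
      by (metis diff_zero integral_unique)
    then show ?thesis
      using \<epsilon> by (simp add: mollify_def)
  qed
  then have "(mollify a \<epsilon> bump (\<lambda>_. 1) has_real_derivative 0) (at y)"
    if "y \<in> {-a + \<epsilon><..<a - \<epsilon>}" for y
    using mollify_bump_has_real_derivative(1)[of a "\<lambda>_. 1" \<epsilon> y] that \<epsilon> by auto
  then show ?thesis
    by (rule DERIV_isconst3[rotated 3]) (use s t in auto)
qed

section \<open>A strong minimum principle for weak supersolutions\<close>

definition weak_supersol :: "real \<Rightarrow> real \<Rightarrow> (real \<Rightarrow> real) \<Rightarrow> bool" where
  "weak_supersol a c Z \<longleftrightarrow>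
     (\<forall>\<phi>. test_fun a \<phi> \<longrightarrow> (\<forall>x. 0 \<le> \<phi> x) \<longrightarrow>
        0 \<le> integral {-a..a} (\<lambda>x. Z x * (c * deriv \<phi> x - deriv (deriv \<phi>) x)))"

lemma test_fun_bump:
  assumes \<epsilon>: "\<epsilon> > 0" and "-a < t - \<epsilon>" "t + \<epsilon> < a"
  shows "test_fun a (\<lambda>x. bump ((x - t) / \<epsilon>))"
  unfolding test_fun_def
proof (intro conjI exI allI impI)
  have "(\<lambda>x. bump ((x - t) / \<epsilon>)) = (\<lambda>x. 1 * bump (1 / \<epsilon> * x + - t / \<epsilon>))"
    by (simp add: diff_divide_distrib)
  then show "(deriv ^^ n) (\<lambda>x. bump ((x - t) / \<epsilon>)) differentiable (at x)" for n x
    using smooth_affine[OF smooth_bump] unfolding smooth_def by metis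
  fix x assume "x \<notin> {t - \<epsilon>..t + \<epsilon>}"
  then have "\<bar>x - t\<bar> \<ge> \<epsilon>"
    by auto
  then have "\<bar>(x - t) / \<epsilon>\<bar> \<ge> 1"
    using \<epsilon> by (simp add: abs_divide le_divide_eq)
  then show "bump ((x - t) / \<epsilon>) = 0"
    by (rule bump_eq_0)
qed (use assms in auto)

lemma deriv_bump_scaled:
  shows "deriv (\<lambda>x. bump ((x - t) / \<epsilon>)) = (\<lambda>x. deriv bump ((x - t) / \<epsilon>) / \<epsilon>)"
    and "deriv (deriv (\<lambda>x. bump ((x - t) / \<epsilon>))) = (\<lambda>x. deriv (deriv bump) ((x - t) / \<epsilon>) / \<epsilon>\<^sup>2)"
proof -
  have affine: "(\<lambda>x. bump ((x - t) / \<epsilon>)) = (\<lambda>x. 1 * bump (1 / \<epsilon> * x + - t / \<epsilon>))"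
    by (simp add: diff_divide_distrib)
  show "deriv (\<lambda>x. bump ((x - t) / \<epsilon>)) = (\<lambda>x. deriv bump ((x - t) / \<epsilon>) / \<epsilon>)"
    using higher_deriv_affine[OF smooth_bump, of 1 1 "1/\<epsilon>" "- t / \<epsilon>"]
    by (simp add: affine diff_divide_distrib)
  show "deriv (deriv (\<lambda>x. bump ((x - t) / \<epsilon>))) = (\<lambda>x. deriv (deriv bump) ((x - t) / \<epsilon>) / \<epsilon>\<^sup>2)"
    using higher_deriv_affine[OF smooth_bump, of 2 1 "1/\<epsilon>" "- t / \<epsilon>"]
    by (simp add: affine diff_divide_distrib numeral_2_eq_2 power2_eq_square)
qed

lemma weak_supersol_mollify:
  assumes sup: "weak_supersol a c Z" and Z: "continuous_on {-a..a} Z"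
      and \<epsilon>: "\<epsilon> > 0" and t: "-a < t - \<epsilon>" "t + \<epsilon> < a"
  shows "c * (- mollify a \<epsilon> (deriv bump) Z t / \<epsilon>) + mollify a \<epsilon> (deriv (deriv bump)) Z t / \<epsilon>\<^sup>2 \<le> 0"
proof -
  have int: "(\<lambda>x. Z x * G ((x - t) / \<epsilon>)) integrable_on {-a..a}" if "smooth G" for G
    by (rule integrable_kernel_product[OF Z smooth_imp_continuous_on[OF that]])
  note int1 = int[OF smooth_deriv[OF smooth_bump]]
    and int2 = int[OF smooth_deriv[OF smooth_deriv[OF smooth_bump]]]
  have "0 \<le> integral {-a..a} (\<lambda>x. Z x * (c * deriv (\<lambda>x. bump ((x - t) / \<epsilon>)) x
      - deriv (deriv (\<lambda>x. bump ((x - t) / \<epsilon>))) x))"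
    using sup test_fun_bump[OF \<epsilon> t] bump_nonneg unfolding weak_supersol_def by blast
  also have "\<dots> = integral {-a..a} (\<lambda>x. c / \<epsilon> * (Z x * deriv bump ((x - t) / \<epsilon>))
      - Z x * deriv (deriv bump) ((x - t) / \<epsilon>) / \<epsilon>\<^sup>2)"
    unfolding deriv_bump_scaled(2) unfolding deriv_bump_scaled(1) by (simp add: algebra_simps)
  also have "\<dots> = c / \<epsilon> * mollify a \<epsilon> (deriv bump) Z t - mollify a \<epsilon> (deriv (deriv bump)) Z t / \<epsilon>\<^sup>2"
    unfolding mollify_def integral_diff[OF integrable_on_mult_right[OF int1] integrable_on_divide[OF int2]]
    by simp
  finally show ?thesis
    by (simp add: algebra_simps)
qed

lemma ode_min_principle:
  fixes z z' g :: "real \<Rightarrow> real"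
  assumes "p < y" "y < q"
      and z: "\<And>t. t \<in> {p..q} \<Longrightarrow> (z has_real_derivative z' t) (at t)"
      and g: "\<And>t. t \<in> {p..q} \<Longrightarrow> ((\<lambda>t. exp (c * t) * z' t) has_real_derivative g t) (at t)"
      and g_nonpos: "\<And>t. t \<in> {p..q} \<Longrightarrow> g t \<le> 0"
  shows "min (z p) (z q) \<le> z y"
proof (rule ccontr)
  assume "\<not> ?thesis"
  then have less: "z y < z p" "z y < z q" by auto
  obtain \<xi>\<^sub>1 where \<xi>\<^sub>1: "p < \<xi>\<^sub>1" "\<xi>\<^sub>1 < y" "z y - z p = (y - p) * z' \<xi>\<^sub>1"
    using MVT2[of p y z z'] z assms(1,2) by force
  obtain \<xi>\<^sub>2 where \<xi>\<^sub>2: "y < \<xi>\<^sub>2" "\<xi>\<^sub>2 < q" "z q - z y = (q - y) * z' \<xi>\<^sub>2"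
    using MVT2[of y q z z'] z assms(1,2) by force
  have "z' \<xi>\<^sub>1 < 0"
    using \<xi>\<^sub>1 less(1) by (smt (verit) mult_nonneg_nonneg)
  moreover have "z' \<xi>\<^sub>2 > 0"
    using \<xi>\<^sub>2 less(2) by (smt (verit) mult_nonneg_nonpos)
  moreover have "exp (c * \<xi>\<^sub>2) * z' \<xi>\<^sub>2 \<le> exp (c * \<xi>\<^sub>1) * z' \<xi>\<^sub>1"
    by (rule DERIV_nonpos_imp_nonincreasing[where f="\<lambda>t. exp (c * t) * z' t"])
       (use \<xi>\<^sub>1 \<xi>\<^sub>2 g g_nonpos in \<open>force+\<close>)
  ultimately show False
    by (smt (verit) exp_gt_zero mult_pos_neg mult_pos_pos)
qed

lemma mollify_min_principle:
  assumes sup: "weak_supersol a c Z" and Z: "continuous_on {-a..a} Z" and \<epsilon>: "\<epsilon> > 0"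
      and pq: "-a + \<epsilon> < p" "p < y" "y < q" "q < a - \<epsilon>"
  shows "min (mollify a \<epsilon> bump Z p) (mollify a \<epsilon> bump Z q) \<le> mollify a \<epsilon> bump Z y"
proof (rule ode_min_principle[OF pq(2,3)])
  let ?z' = "\<lambda>t. - mollify a \<epsilon> (deriv bump) Z t / \<epsilon>"
  let ?z'' = "\<lambda>t. mollify a \<epsilon> (deriv (deriv bump)) Z t / \<epsilon>\<^sup>2"
  show "(mollify a \<epsilon> bump Z has_real_derivative ?z' t) (at t)" for t
    using mollify_bump_has_real_derivative(1)[OF Z] \<epsilon> by simp
  show "((\<lambda>t. exp (c * t) * ?z' t) has_real_derivative exp (c * t) * (c * ?z' t + ?z'' t)) (at t)" for t
    using mollify_bump_has_real_derivative(2)[OF Z, of \<epsilon> t] \<epsilon>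
    by (auto intro!: derivative_eq_intros simp: field_simps power2_eq_square)
  show "exp (c * t) * (c * ?z' t + ?z'' t) \<le> 0" if "t \<in> {p..q}" for t
    using weak_supersol_mollify[OF sup Z \<epsilon>, of t] that pq
    by (simp add: mult_nonneg_nonpos)
qed

lemma weak_supersol_min_oscillation:
  assumes sup: "weak_supersol a c Z" and Z: "continuous_on {-a..a} Z" and \<epsilon>: "0 < \<epsilon>"
      and pq: "-a + \<epsilon> < p" "p < y" "y < q" "q < a - \<epsilon>"
      and near: "\<And>x t. x \<in> {-a..a} \<Longrightarrow> t \<in> {-a..a} \<Longrightarrow> \<bar>x - t\<bar> < \<epsilon> \<Longrightarrow> \<bar>Z x - Z t\<bar> \<le> \<delta>"
  shows "min (Z p) (Z q) - 2 * \<delta> \<le> Z y"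
proof -
  let ?M = "mollify a \<epsilon> bump Z" and ?N = "mollify a \<epsilon> bump (\<lambda>_. 1)"
  have pyq: "p \<in> {-a..a}" "y \<in> {-a..a}" "q \<in> {-a..a}"
    using pq \<epsilon> by auto
  have N: "?N y = ?N p" "?N q = ?N p" "0 < ?N p"
    using \<epsilon> pq by (intro mollify_bump_one_const mollify_bump_one_pos; linarith)+
  have "(min (Z p) (Z q) - \<delta>) * ?N p \<le> (Z p - \<delta>) * ?N p"
    using N(3) by (intro mult_right_mono) auto
  also have "\<dots> \<le> ?M p"
    by (rule mollify_bump_bounds(2)[OF Z \<epsilon> near[OF _ pyq(1)]])
  finally have Mp: "(min (Z p) (Z q) - \<delta>) * ?N p \<le> ?M p" .
  have "(min (Z p) (Z q) - \<delta>) * ?N p \<le> (Z q - \<delta>) * ?N q"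
    unfolding N(2) using N(3) by (intro mult_right_mono) auto
  also have "\<dots> \<le> ?M q"
    by (rule mollify_bump_bounds(2)[OF Z \<epsilon> near[OF _ pyq(3)]])
  finally have "(min (Z p) (Z q) - \<delta>) * ?N p \<le> min (?M p) (?M q)"
    using Mp by simp
  also have "\<dots> \<le> ?M y"
    by (rule mollify_min_principle[OF sup Z \<epsilon> pq])
  also have "\<dots> \<le> (Z y + \<delta>) * ?N p"
    using mollify_bump_bounds(1)[OF Z \<epsilon> near[OF _ pyq(2)]] N(1) by simp
  finally show ?thesis
    using N(3) by simp
qed

lemma weak_supersol_pos:
  assumes a: "0 < a" and Z: "continuous_on {-a..a} Z" and sup: "weak_supersol a c Z"
      and ends: "Z (-a) > 0" "Z a > 0" and x0: "x0 \<in> {-a..a}"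
  shows "Z x0 > 0"
proof (rule ccontr)
  assume "\<not> Z x0 > 0"
  then have Zx0: "Z x0 \<le> 0" by simp
  with ends x0 have x0_int: "-a < x0" "x0 < a"
    by (metis atLeastAtMost_iff less_eq_real_def not_le)+
  define \<delta> where "\<delta> = min (Z (-a)) (Z a) / 4"
  have \<delta>: "\<delta> > 0" "4 * \<delta> \<le> Z (-a)" "4 * \<delta> \<le> Z a"
    using ends by (simp_all add: \<delta>_def)
  have "uniformly_continuous_on {-a..a} Z"
    by (rule compact_uniformly_continuous[OF Z compact_Icc])
  then obtain \<eta> where \<eta>: "\<eta> > 0"
    and "\<forall>x\<in>{-a..a}. \<forall>x'\<in>{-a..a}. dist x' x < \<eta> \<longrightarrow> dist (Z x') (Z x) < \<delta>"
    using \<delta>(1) unfolding uniformly_continuous_on_def by blast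
  then have near: "\<And>x t. x \<in> {-a..a} \<Longrightarrow> t \<in> {-a..a} \<Longrightarrow> \<bar>x - t\<bar> < \<eta> \<Longrightarrow> \<bar>Z x - Z t\<bar> \<le> \<delta>"
    by (fastforce simp: dist_real_def)
  define p where "p = -a + min \<eta> (x0 + a) / 2"
  define q where "q = a - min \<eta> (a - x0) / 2"
  have pq: "-a < p" "p < x0" "x0 < q" "q < a"
    using \<eta> x0_int by (auto simp: p_def q_def min_def field_simps)
  have "\<bar>Z p - Z (-a)\<bar> \<le> \<delta>" "\<bar>Z q - Z a\<bar> \<le> \<delta>"
    using near[of p "-a"] near[of q a] pq \<eta> x0_int by (auto simp: p_def q_def)
  then have "3 * \<delta> \<le> min (Z p) (Z q)"
    using \<delta> by (simp add: abs_le_iff)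
  define h where "h = min \<eta> (min (p + a) (a - q))"
  have h: "0 < h" "h \<le> \<eta>" "h \<le> p + a" "h \<le> a - q"
    using \<eta> pq by (auto simp: h_def)
  define \<epsilon> where "\<epsilon> = h / 2"
  have \<epsilon>: "0 < \<epsilon>" "-a + \<epsilon> < p" "q < a - \<epsilon>" "\<epsilon> \<le> \<eta>"
    using h by (auto simp: \<epsilon>_def)
  have "min (Z p) (Z q) - 2 * \<delta> \<le> Z x0"
    using near \<epsilon>(4) by (intro weak_supersol_min_oscillation[OF sup Z \<epsilon>(1,2) pq(2,3) \<epsilon>(3)]) auto
  then show False
    using \<open>3 * \<delta> \<le> min (Z p) (Z q)\<close> \<delta>(1) Zx0 by linarith
qed

section \<open>Comparison with exponential barriers\<close>

lemma test_fun_imp_smooth: "test_fun a \<phi> \<Longrightarrow> smooth \<phi>"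
  by (simp add: test_fun_def smooth_def)

lemma test_fun_vanishes_at_ends:
  assumes "test_fun a \<phi>"
  shows "\<phi> a = 0" "\<phi> (-a) = 0" "deriv \<phi> a = 0" "deriv \<phi> (-a) = 0"
proof -
  obtain \<alpha> \<beta> where ab: "-a < \<alpha>" "\<beta> < a" and supp: "\<And>x. x \<notin> {\<alpha>..\<beta>} \<Longrightarrow> \<phi> x = 0"
    using assms unfolding test_fun_def by blast
  have "(\<phi> has_real_derivative 0) (at a)"
    by (rule has_field_derivative_transform_within_open[OF DERIV_const, where S="{\<beta><..}"])
       (use ab supp in auto)
  moreover have "(\<phi> has_real_derivative 0) (at (-a))"
    by (rule has_field_derivative_transform_within_open[OF DERIV_const, where S="{..<\<alpha>}"])
       (use ab supp in auto)
  ultimately show "deriv \<phi> a = 0" "deriv \<phi> (-a) = 0"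
    by (simp_all add: DERIV_imp_deriv)
  show "\<phi> a = 0" "\<phi> (-a) = 0"
    using ab supp by auto
qed

lemma weak_sol_exp:
  assumes a: "0 \<le> a"
  shows "weak_sol a c (\<lambda>x. v * exp (- s * (x + a))) (\<lambda>x. (c * s - s\<^sup>2) * (v * exp (- s * (x + a))))"
  unfolding weak_sol_def
proof (intro allI impI)
  fix \<phi> assume \<phi>: "test_fun a \<phi>"
  note smooth = test_fun_imp_smooth[OF \<phi>] smooth_deriv[OF test_fun_imp_smooth[OF \<phi>]]
  define E where "E x = v * exp (- s * (x + a))" for x
  define L where "L x = c * deriv \<phi> x - deriv (deriv \<phi>) x" for x
  define G where "G x = (c - s) * E x * \<phi> x - E x * deriv \<phi> x" for x
  have E: "(E has_real_derivative - s * E x) (at x)" for x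
    unfolding E_def by (auto intro!: derivative_eq_intros)
  have "(G has_real_derivative E x * L x - (c * s - s\<^sup>2) * E x * \<phi> x) (at x)" for x
    unfolding G_def L_def
    by (auto intro!: derivative_eq_intros E smooth_has_real_derivative smooth
             simp: algebra_simps power2_eq_square)
  then have "((\<lambda>x. E x * L x - (c * s - s\<^sup>2) * E x * \<phi> x) has_integral G a - G (-a)) {-a..a}"
    using a by (intro fundamental_theorem_of_calculus)
       (auto simp: has_real_derivative_iff_has_vector_derivative has_vector_derivative_at_within)
  moreover have "G a = 0" "G (-a) = 0"
    unfolding G_def using test_fun_vanishes_at_ends[OF \<phi>] by auto
  ultimately have "integral {-a..a} (\<lambda>x. E x * L x - (c * s - s\<^sup>2) * E x * \<phi> x) = 0"
    by (simp add: integral_unique)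
  moreover have "continuous_on {-a..a} E" "continuous_on {-a..a} L" "continuous_on {-a..a} \<phi>"
    unfolding E_def L_def
    by (intro continuous_intros smooth_imp_continuous_on smooth smooth_deriv[OF smooth(2)])+
  ultimately show "integral {-a..a} (\<lambda>x. v * exp (- s * (x + a)) * (c * deriv \<phi> x - deriv (deriv \<phi>) x))
      = integral {-a..a} (\<lambda>x. (c * s - s\<^sup>2) * (v * exp (- s * (x + a))) * \<phi> x)"
    unfolding E_def L_def
    by (subst (asm) integral_diff) (auto intro!: integrable_continuous_interval continuous_intros)
qed

lemma weak_supersol_diff:
  assumes U: "weak_sol a c U G" "continuous_on {-a..a} U"
      and u: "weak_sol a c u F" "continuous_on {-a..a} u"
      and G: "continuous_on {-a..a} G" "\<forall>x\<in>{-a..a}. 0 \<le> G x"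
      and F_le_G: "\<forall>x\<in>{-a..a}. F x \<le> G x"
  shows "weak_supersol a c (\<lambda>x. U x - u x)"
  unfolding weak_supersol_def
proof (intro allI impI)
  fix \<phi> assume \<phi>: "test_fun a \<phi>" and \<phi>_nonneg: "\<forall>x. 0 \<le> \<phi> x"
  note smooth = test_fun_imp_smooth[OF \<phi>] smooth_deriv[OF test_fun_imp_smooth[OF \<phi>]]
  define L where "L x = c * deriv \<phi> x - deriv (deriv \<phi>) x" for x
  have cont: "continuous_on {-a..a} \<phi>" "continuous_on {-a..a} L"
    unfolding L_def
    by (intro continuous_intros smooth_imp_continuous_on smooth smooth_deriv[OF smooth(2)])+
  have int_G: "(\<lambda>x. G x * \<phi> x) integrable_on {-a..a}"
    by (intro integrable_continuous_interval continuous_intros G(1) cont)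
  \<comment> \<open>\<open>F \<phi>\<close> need not be integrable; then its integral is \<open>0\<close> and \<open>G \<ge> 0\<close> is what is needed.\<close>
  have F_le: "integral {-a..a} (\<lambda>x. F x * \<phi> x) \<le> integral {-a..a} (\<lambda>x. G x * \<phi> x)"
  proof (cases "(\<lambda>x. F x * \<phi> x) integrable_on {-a..a}")
    case True
    then show ?thesis
      using F_le_G \<phi>_nonneg by (intro integral_le[OF True int_G]) (simp add: mult_right_mono)
  next
    case False
    have "0 \<le> integral {-a..a} (\<lambda>x. G x * \<phi> x)"
      by (rule integral_nonneg[OF int_G]) (use G(2) \<phi>_nonneg in auto)
    then show ?thesis
      using False by (simp add: not_integrable_integral)
  qed
  have "integral {-a..a} (\<lambda>x. G x * \<phi> x) - integral {-a..a} (\<lambda>x. F x * \<phi> x)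
      = integral {-a..a} (\<lambda>x. U x * L x) - integral {-a..a} (\<lambda>x. u x * L x)"
    using U(1) u(1) \<phi> unfolding weak_sol_def L_def by simp
  also have "\<dots> = integral {-a..a} (\<lambda>x. (U x - u x) * L x)"
    by (subst integral_diff[symmetric])
       (auto intro!: integrable_continuous_interval continuous_intros U(2) u(2) cont
             simp: left_diff_distrib)
  finally show "0 \<le> integral {-a..a} (\<lambda>x. (U x - u x) * (c * deriv \<phi> x - deriv (deriv \<phi>) x))"
    using F_le by (simp add: L_def)
qed

lemma weak_sol_below_exp_barrier:
  assumes a: "0 < a" and s: "c * s - s\<^sup>2 = lam" and lam: "0 \<le> lam" and b: "0 < b"
      and u: "weak_sol a c u F" "continuous_on {-a..a} u"
      and F: "\<forall>x\<in>{-a..a}. F x \<le> lam * (b * exp (- s * (x + a)))"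
      and ends: "u (-a) < b" "u a \<le> 0"
      and x: "x \<in> {-a..a}"
  shows "u x < b * exp (- s * (x + a))"
proof -
  have sup: "weak_supersol a c (\<lambda>x. b * exp (- s * (x + a)) - u x)"
  proof (rule weak_supersol_diff[OF _ _ u])
    show "weak_sol a c (\<lambda>x. b * exp (- s * (x + a))) (\<lambda>x. lam * (b * exp (- s * (x + a))))"
      using weak_sol_exp[of a c b s] a s by simp
  qed (use F lam b in \<open>auto intro!: continuous_intros\<close>)
  have "continuous_on {-a..a} (\<lambda>x. b * exp (- s * (x + a)) - u x)"
    by (intro continuous_intros u(2))
  moreover have "0 < b * exp (- s * (a + a))"
    using b by simp
  ultimately show ?thesis
    using weak_supersol_pos[OF a _ sup _ _ x] ends by simp
qed

lemma nonneg_row_le_eigen: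
  fixes A1 A2 :: real
  assumes "0 \<le> A1" "0 \<le> A2" "A1 * v1 + A2 * v2 = lam * u" "y1 \<le> t * v1" "y2 \<le> t * v2"
  shows "A1 * y1 + A2 * y2 \<le> lam * (t * u)"
proof -
  have "A1 * y1 + A2 * y2 \<le> A1 * (t * v1) + A2 * (t * v2)"
    using assms by (intro add_mono mult_left_mono)
  also have "\<dots> = t * (A1 * v1 + A2 * v2)"
    by (simp add: algebra_simps)
  also have "\<dots> = lam * (t * u)"
    using assms(3) by simp
  finally show ?thesis .
qed

lemma cooperative_exp_bound:
  fixes w m Fw Fm :: "real \<Rightarrow> real"
  assumes a: "0 < a" and v: "0 < v1" "0 < v2"
      and A: "0 \<le> A11" "0 \<le> A12" "0 \<le> A21" "0 \<le> A22"
      and eig: "A11 * v1 + A12 * v2 = lam * v1" "A21 * v1 + A22 * v2 = lam * v2"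
      and s: "c * s - s\<^sup>2 = lam"
      and w: "weak_sol a c w Fw" "continuous_on {-a..a} w"
      and m: "weak_sol a c m Fm" "continuous_on {-a..a} m"
      and Fw: "\<forall>x\<in>{-a..a}. Fw x \<le> A11 * max (w x) 0 + A12 * max (m x) 0"
      and Fm: "\<forall>x\<in>{-a..a}. Fm x \<le> A21 * max (w x) 0 + A22 * max (m x) 0"
      and \<kappa>\<^sub>0: "0 < \<kappa>\<^sub>0" "w (-a) \<le> \<kappa>\<^sub>0 * v1" "m (-a) \<le> \<kappa>\<^sub>0 * v2" "w a \<le> 0" "m a \<le> 0"
      and x: "x \<in> {-a..a}"
  shows "w x \<le> \<kappa>\<^sub>0 * v1 * exp (- s * (x + a)) \<and> m x \<le> \<kappa>\<^sub>0 * v2 * exp (- s * (x + a))"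
proof -
  have "0 \<le> lam * v1"
    unfolding eig(1)[symmetric] using A v by simp
  then have lam: "0 \<le> lam"
    using v(1) by (simp add: zero_le_mult_iff)
  define E where "E x = exp (- s * (x + a))" for x
  have E: "0 < E y" for y
    by (simp add: E_def)
  define R where "R x = max (w x / (v1 * E x)) (m x / (v2 * E x))" for x
  have "continuous_on {-a..a} R"
    unfolding R_def E_def using v by (intro continuous_intros w(2) m(2)) simp_all
  moreover have "{-a..a} \<noteq> {}"
    using a by simp
  ultimately obtain x\<^sub>m where x\<^sub>m: "x\<^sub>m \<in> {-a..a}" and R_max: "\<forall>y\<in>{-a..a}. R y \<le> R x\<^sub>m"
    using continuous_attains_sup[OF compact_Icc] by blast
  define \<kappa> where "\<kappa> = R x\<^sub>m"
  have below: "w y \<le> \<kappa> * E y * v1" "m y \<le> \<kappa> * E y * v2" if "y \<in> {-a..a}" for y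
  proof -
    have "w y / (v1 * E y) \<le> \<kappa>" "m y / (v2 * E y) \<le> \<kappa>"
      using R_max that unfolding \<kappa>_def R_def by fastforce+
    then show "w y \<le> \<kappa> * E y * v1" "m y \<le> \<kappa> * E y * v2"
      using v E[of y] by (simp_all add: pos_divide_le_eq mult_ac)
  qed
  have "\<kappa> \<le> \<kappa>\<^sub>0"
  proof (rule ccontr)
    assume "\<not> \<kappa> \<le> \<kappa>\<^sub>0"
    then have \<kappa>: "\<kappa>\<^sub>0 < \<kappa>" "0 < \<kappa>"
      using \<kappa>\<^sub>0(1) by auto
    have "0 < \<kappa> * E y * v1" "0 < \<kappa> * E y * v2" for y
      using \<kappa> v E[of y] by simp_all
    then have pos_part: "max (w y) 0 \<le> \<kappa> * E y * v1" "max (m y) 0 \<le> \<kappa> * E y * v2"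
      if "y \<in> {-a..a}" for y
      using below[OF that] by (simp_all add: less_imp_le)
    have "Fw y \<le> lam * (\<kappa> * v1 * exp (- s * (y + a)))" "Fm y \<le> lam * (\<kappa> * v2 * exp (- s * (y + a)))"
      if "y \<in> {-a..a}" for y
      using order_trans[OF Fw[rule_format, OF that] nonneg_row_le_eigen[OF A(1,2) eig(1) pos_part[OF that]]]
        order_trans[OF Fm[rule_format, OF that] nonneg_row_le_eigen[OF A(3,4) eig(2) pos_part[OF that]]]
      by (simp_all add: E_def mult_ac)
    then have Fw': "\<forall>y\<in>{-a..a}. Fw y \<le> lam * (\<kappa> * v1 * exp (- s * (y + a)))"
      and Fm': "\<forall>y\<in>{-a..a}. Fm y \<le> lam * (\<kappa> * v2 * exp (- s * (y + a)))"
      by blast+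
    have "\<kappa>\<^sub>0 * v1 < \<kappa> * v1" "\<kappa>\<^sub>0 * v2 < \<kappa> * v2" and b: "0 < \<kappa> * v1" "0 < \<kappa> * v2"
      using \<kappa> v by simp_all
    then have "w (-a) < \<kappa> * v1" "m (-a) < \<kappa> * v2"
      using \<kappa>\<^sub>0(2,3) by linarith+
    then have "w x\<^sub>m < \<kappa> * v1 * E x\<^sub>m" "m x\<^sub>m < \<kappa> * v2 * E x\<^sub>m"
      using weak_sol_below_exp_barrier[OF a s lam b(1) w Fw' _ \<kappa>\<^sub>0(4) x\<^sub>m]
        weak_sol_below_exp_barrier[OF a s lam b(2) m Fm' _ \<kappa>\<^sub>0(5) x\<^sub>m]
      by (simp_all add: E_def)
    then have "R x\<^sub>m < \<kappa>"
      using v E[of x\<^sub>m] by (simp add: R_def divide_less_eq mult_ac)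
    then show False
      by (simp add: \<kappa>_def)
  qed
  then have "\<kappa> * E x * v1 \<le> \<kappa>\<^sub>0 * E x * v1" "\<kappa> * E x * v2 \<le> \<kappa>\<^sub>0 * E x * v2"
    using v E[of x] by (intro mult_right_mono; simp)+
  then have "w x \<le> \<kappa>\<^sub>0 * E x * v1" "m x \<le> \<kappa>\<^sub>0 * E x * v2"
    using below[OF x] by linarith+
  then show ?thesis
    by (simp add: E_def mult_ac)
qed

section \<open>The localized problem\<close>

lemma f_w_truncated_le:
  assumes "0 \<le> \<mu>" "\<mu> \<le> 1"
  shows "f_w \<mu> w m * ind (w \<ge> 0) * ind (m \<ge> 0) \<le> (1 - \<mu>) * max w 0 + \<mu> * max m 0"
proof (cases "w \<ge> 0 \<and> m \<ge> 0")
  case True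
  then have "0 \<le> w * (w + m)" by simp
  then show ?thesis
    using True by (simp add: f_w_def ind_def algebra_simps)
qed (use assms in \<open>auto simp: ind_def\<close>)

lemma f_m_truncated_le:
  assumes "0 \<le> \<mu>" "\<mu> \<le> r" "0 < K"
  shows "f_m r K \<mu> w m * ind (w \<ge> 0) * ind (m \<ge> 0) \<le> \<mu> * max w 0 + (r - \<mu>) * max m 0"
proof (cases "w \<ge> 0 \<and> m \<ge> 0")
  case True
  then have "0 \<le> r * m * ((w + m) / K)" using assms by simp
  then show ?thesis
    using True by (simp add: f_m_def ind_def algebra_simps)
qed (use assms in \<open>auto simp: ind_def\<close>)

text \<open>\<open>(c_star r \<mu>)\<^sup>2 / 4\<close> is the Perron eigenvalue of the linearisation
  \<open>[[1 - \<mu>, \<mu>], [\<mu>, r - \<mu>]]\<close> of the reaction terms at \<open>(0, 0)\<close>.\<close>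
lemma c_star_eigenpair:
  assumes r: "1 < r" and \<mu>: "0 < \<mu>" "2 * \<mu> < r"
  defines "lam \<equiv> (c_star r \<mu>)\<^sup>2 / 4"
  shows "0 < lam - 1 + \<mu>"
    and "(1 - \<mu>) * \<mu> + \<mu> * (lam - 1 + \<mu>) = lam * \<mu>"
    and "\<mu> * \<mu> + (r - \<mu>) * (lam - 1 + \<mu>) = lam * (lam - 1 + \<mu>)"
proof -
  define d where "d = sqrt ((r - 1)\<^sup>2 + 4 * \<mu>\<^sup>2)"
  have d: "0 \<le> d" "d\<^sup>2 = (r - 1)\<^sup>2 + 4 * \<mu>\<^sup>2"
    by (simp_all add: d_def)
  have lam: "lam = (1 + r - 2 * \<mu> + d) / 2"
    using r \<mu> d(1) by (simp add: lam_def c_star_def d_def[symmetric])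
  show "0 < lam - 1 + \<mu>"
    using r d(1) by (simp add: lam field_simps)
  show "(1 - \<mu>) * \<mu> + \<mu> * (lam - 1 + \<mu>) = lam * \<mu>"
    by (simp add: algebra_simps)
  have "4 * (\<mu> * \<mu>) + 2 * (r - \<mu>) * (r - 1 + d) = (1 + r - 2 * \<mu> + d) * (r - 1 + d)"
    using d(2) by algebra
  then show "\<mu> * \<mu> + (r - \<mu>) * (lam - 1 + \<mu>) = lam * (lam - 1 + \<mu>)"
    by (simp add: lam field_simps)
qed

lemma decay_rate_root:
  assumes "4 * lam \<le> c\<^sup>2"
  shows "c * ((c + sqrt (c\<^sup>2 - 4 * lam)) / 2) - ((c + sqrt (c\<^sup>2 - 4 * lam)) / 2)\<^sup>2 = lam"
  using assms by (simp add: power2_eq_square field_simps)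

lemma assumption1_params:
  "assumption1 r K \<mu> \<Longrightarrow> 1 < r \<and> 0 < \<mu> \<and> 2 * \<mu> < r \<and> \<mu> \<le> 1 \<and> 0 < K"
  unfolding assumption1_def by auto

lemma Pa_le_exp_barrier:
  assumes params: "assumption1 r K \<mu>"
      and P: "Pa r K \<mu> a c w m" and a: "0 < a" and c: "c_star r \<mu> \<le> c" and x: "x \<in> {-a..a}"
      and \<kappa>\<^sub>0: "0 < \<kappa>\<^sub>0" "fst (eq_star r K \<mu>) \<le> \<kappa>\<^sub>0 * \<mu>"
        "snd (eq_star r K \<mu>) \<le> \<kappa>\<^sub>0 * ((c_star r \<mu>)\<^sup>2 / 4 - 1 + \<mu>)"
  shows "max (w x) (m x)
    \<le> \<kappa>\<^sub>0 * max \<mu> ((c_star r \<mu>)\<^sup>2 / 4 - 1 + \<mu>) * exp ((- c - sqrt (c\<^sup>2 - (c_star r \<mu>)\<^sup>2)) / 2 * (x + a))"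
proof -
  have r: "1 < r" and \<mu>: "0 < \<mu>" "2 * \<mu> < r" "\<mu> \<le> 1" and K: "0 < K"
    using assumption1_params[OF params] by auto
  define lam where "lam = (c_star r \<mu>)\<^sup>2 / 4"
  define v where "v = lam - 1 + \<mu>"
  note eig = c_star_eigenpair[OF r \<mu>(1,2), folded lam_def v_def]
  have "0 \<le> sqrt ((r - 1)\<^sup>2 + 4 * \<mu>\<^sup>2)"
    by simp
  then have "0 \<le> c_star r \<mu>"
    using r \<mu>(2) by (simp add: c_star_def)
  then have "4 * lam \<le> c\<^sup>2"
    using power_mono[OF c] by (simp add: lam_def)
  define s where "s = (c + sqrt (c\<^sup>2 - 4 * lam)) / 2"
  have s: "c * s - s\<^sup>2 = lam"
    using decay_rate_root[OF \<open>4 * lam \<le> c\<^sup>2\<close>] by (simp add: s_def)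
  have sol: "weak_sol a c w (\<lambda>x. f_w \<mu> (w x) (m x) * ind (w x \<ge> 0) * ind (m x \<ge> 0))"
      "weak_sol a c m (\<lambda>x. f_m r K \<mu> (w x) (m x) * ind (w x \<ge> 0) * ind (m x \<ge> 0))"
      "continuous_on {-a..a} w" "continuous_on {-a..a} m"
    and ends: "w (-a) = fst (eq_star r K \<mu>)" "m (-a) = snd (eq_star r K \<mu>)" "w a = 0" "m a = 0"
    using P by (simp_all add: Pa_def)
  have "w x \<le> \<kappa>\<^sub>0 * \<mu> * exp (- s * (x + a)) \<and> m x \<le> \<kappa>\<^sub>0 * v * exp (- s * (x + a))"
  proof (rule cooperative_exp_bound[OF a \<mu>(1) eig(1) _ _ _ _ eig(2,3) s sol(1,3,2,4) _ _ \<kappa>\<^sub>0(1) _ _ _ _ x])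
    show "\<forall>x\<in>{-a..a}. f_w \<mu> (w x) (m x) * ind (w x \<ge> 0) * ind (m x \<ge> 0)
        \<le> (1 - \<mu>) * max (w x) 0 + \<mu> * max (m x) 0"
      using f_w_truncated_le \<mu> by simp
    show "\<forall>x\<in>{-a..a}. f_m r K \<mu> (w x) (m x) * ind (w x \<ge> 0) * ind (m x \<ge> 0)
        \<le> \<mu> * max (w x) 0 + (r - \<mu>) * max (m x) 0"
      using f_m_truncated_le \<mu> K by simp
  qed (use \<mu> \<kappa>\<^sub>0 ends in \<open>auto simp: lam_def v_def\<close>)
  then have "w x \<le> \<kappa>\<^sub>0 * max \<mu> v * exp (- s * (x + a))" "m x \<le> \<kappa>\<^sub>0 * max \<mu> v * exp (- s * (x + a))"
    using \<kappa>\<^sub>0(1)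
    by (auto elim!: order_trans intro!: mult_right_mono simp del: max.absorb_iff1 max.absorb_iff2)
  moreover have "(- c - sqrt (c\<^sup>2 - (c_star r \<mu>)\<^sup>2)) / 2 * (x + a) = - s * (x + a)"
    by (simp add: s_def lam_def field_simps)
  ultimately show ?thesis
    unfolding v_def lam_def by (simp only: max.bounded_iff)
qed

theorem mainTheorem6:
  fixes r K \<mu> :: real
  assumes "assumption1 r K \<mu>"
  shows "\<exists>C>0. \<forall>a>0. \<forall>c\<ge>c_star r \<mu>. \<forall>w m. Pa r K \<mu> a c w m \<longrightarrow>
           (\<forall>x\<in>{-a..a}. max (w x) (m x)
              \<le> C * exp ((- c - sqrt (c^2 - (c_star r \<mu>)^2)) / 2 * (x + a)))"
proof -
  have r: "1 < r" and \<mu>: "0 < \<mu>" "2 * \<mu> < r"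
    using assumption1_params[OF assms] by auto
  define v where "v = (c_star r \<mu>)\<^sup>2 / 4 - 1 + \<mu>"
  have v: "0 < v"
    unfolding v_def by (rule c_star_eigenpair(1)[OF r \<mu>])
  define \<kappa>\<^sub>0 where "\<kappa>\<^sub>0 = max 1 (max (fst (eq_star r K \<mu>) / \<mu>) (snd (eq_star r K \<mu>) / v))"
  have "fst (eq_star r K \<mu>) / \<mu> \<le> \<kappa>\<^sub>0" "snd (eq_star r K \<mu>) / v \<le> \<kappa>\<^sub>0"
    by (simp_all add: \<kappa>\<^sub>0_def)
  then have \<kappa>\<^sub>0: "0 < \<kappa>\<^sub>0" "fst (eq_star r K \<mu>) \<le> \<kappa>\<^sub>0 * \<mu>" "snd (eq_star r K \<mu>) \<le> \<kappa>\<^sub>0 * v"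
    using \<mu>(1) v by (simp_all add: \<kappa>\<^sub>0_def pos_divide_le_eq)
  show ?thesis
  proof (intro exI[of _ "\<kappa>\<^sub>0 * max \<mu> v"] conjI allI impI ballI)
    show "0 < \<kappa>\<^sub>0 * max \<mu> v"
      using \<kappa>\<^sub>0(1) \<mu>(1) by simp
  qed (use Pa_le_exp_barrier[OF assms _ _ _ _ \<kappa>\<^sub>0[unfolded v_def]] in \<open>simp add: v_def\<close>)
qed

end
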